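(* Let $D$ be a diagram of a link $L$, fix $a^*\in A(D)$, and for $a\in A(D)$ let $d_a=\beta_a\beta_{a^*}^{-1}\in Dis(MQ(L))$. Then: (1) the abelian group $Dis(MQ(L))$ is a $\Lambda$-module with scalar multiplication determined by $m\cdot d=d^m$ and $t^n\cdot d=\beta_{a^*}^n d\beta_{a^*}^{-n}$ for all $m,n\in\mathbb Z$, $d\in Dis(MQ(L))$; (2) at every crossing of $D$, in additive notation, $(1-t)\cdot d_{a_1}+t\cdot d_{a_2}-d_{a_3}=0$; (3) the set $\{d_a:a\in A(D)\}$ generates $Dis(MQ(L))$ as a $\Lambda$-module.
   Context: $\Lambda=\mathbb Z[t^{\pm1}]$. Let $L$ be an oriented classical link with diagram $D$; $A(D)$ is the set of arcs of $D$. At a crossing, $a_1$ denotes the overpassing arc, $a_2$ the underpassing arc on the right of $a_1$ (with respect to the orientation of $a_1$), $a_3$ the underpassing arc on the left of $a_1$. A quandle is a set $Q$ with a binary operation $\triangleright$ such that $x\triangleright x=x$, each translation $\beta_y(x)=x\triangleright y$ is a bijection, and $(x\triangleright y)\triangleright z=(x\triangleright z)\triangleright(y\triangleright z)$. It is medial if $(w\triangleright x)\triangleright(y\triangleright z)=(w\triangleright y)\triangleright(x\triangleright z)$ for all $w,x,y,z$. The displacement group $Dis(Q)$ is the subgroup of the automorphism group of $Q$ generated by all $\beta_y\beta_z^{-1}$; for medial $Q$ it is abelian. $MQ(L)$ is the medial quandle generated by $A(D)$ subject to $a_2\triangleright a_1=a_3$ at every crossing; arcs $a\in A(D)$ are regarded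 as elements of $MQ(L)$. Equivalently, with $MG(L)$ the group generated by $A(D)$ subject to (i) $c_1c_2^{-1}c_3=c_3c_2^{-1}c_1$ for conjugates $c_1,c_2,c_3$ of elements of $A(D)$ and (ii) $a_1a_2a_1^{-1}=a_3$ at every crossing, $MQ(L)$ is the set of conjugates of elements of $A(D)$ in $MG(L)$ with $x\triangleright y=yxy^{-1}$. *)

theory Defs
  imports "HOL-Algebra.Algebra" "HOL-Computational_Algebra.Formal_Laurent_Series"
begin

text \<open>A crossing is the triple (a1, a2, a3): a1 the over-arc, a2 the under-arc on the
  right of a1, a3 the under-arc on the left of a1.\<close>

definition diagram :: "'a set \<Rightarrow> ('a \<times> 'a \<times> 'a) set \<Rightarrow> bool" where
  "diagram A C \<longleftrightarrow> finite A \<and> A \<noteq> {} \<and> finite C \<and> C \<subseteq> A \<times> A \<times> A"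

text \<open>Terms in the signature of quandles: Op x y = x \<triangleright> y, LOp x y = the preimage of x
  under the translation by y.\<close>
datatype 'a qterm = Gen 'a | Op "'a qterm" "'a qterm" | LOp "'a qterm" "'a qterm"

fun qgens :: "'a qterm \<Rightarrow> 'a set" where
  "qgens (Gen a) = {a}"
| "qgens (Op x y) = qgens x \<union> qgens y"
| "qgens (LOp x y) = qgens x \<union> qgens y"

definition qterms :: "'a set \<Rightarrow> 'a qterm set" where
  "qterms A = {t. qgens t \<subseteq> A}"

inductive_set mq_rel :: "'a set \<Rightarrow> ('a \<times> 'a \<times> 'a) set \<Rightarrow> ('a qterm \<times> 'a qterm) set"
  for A C where
  refl: "x \<in> qterms A \<Longrightarrow> (x, x) \<in> mq_rel A C"
| sym: "(x, y) \<in> mq_rel A C \<Longrightarrow> (y, x) \<in> mq_rel A C"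
| trans: "(x, y) \<in> mq_rel A C \<Longrightarrow> (y, z) \<in> mq_rel A C \<Longrightarrow> (x, z) \<in> mq_rel A C"
| cong_Op: "(x, x') \<in> mq_rel A C \<Longrightarrow> (y, y') \<in> mq_rel A C \<Longrightarrow> (Op x y, Op x' y') \<in> mq_rel A C"
| cong_LOp: "(x, x') \<in> mq_rel A C \<Longrightarrow> (y, y') \<in> mq_rel A C \<Longrightarrow> (LOp x y, LOp x' y') \<in> mq_rel A C"
| idem: "x \<in> qterms A \<Longrightarrow> (Op x x, x) \<in> mq_rel A C"
| inv1: "x \<in> qterms A \<Longrightarrow> y \<in> qterms A \<Longrightarrow> (Op (LOp x y) y, x) \<in> mq_rel A C"
| inv2: "x \<in> qterms A \<Longrightarrow> y \<in> qterms A \<Longrightarrow> (LOp (Op x y) y, x) \<in> mq_rel A C"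
| distr: "x \<in> qterms A \<Longrightarrow> y \<in> qterms A \<Longrightarrow> z \<in> qterms A \<Longrightarrow>
     (Op (Op x y) z, Op (Op x z) (Op y z)) \<in> mq_rel A C"
| medial: "w \<in> qterms A \<Longrightarrow> x \<in> qterms A \<Longrightarrow> y \<in> qterms A \<Longrightarrow> z \<in> qterms A \<Longrightarrow>
     (Op (Op w x) (Op y z), Op (Op w y) (Op x z)) \<in> mq_rel A C"
| crossing: "(a1, a2, a3) \<in> C \<Longrightarrow> a1 \<in> A \<Longrightarrow> a2 \<in> A \<Longrightarrow> a3 \<in> A \<Longrightarrow>
     (Op (Gen a2) (Gen a1), Gen a3) \<in> mq_rel A C"

definition MQ :: "'a set \<Rightarrow> ('a \<times> 'a \<times> 'a) set \<Rightarrow> 'a qterm set set" where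
  "MQ A C = qterms A // mq_rel A C"

definition MQ_op :: "'a set \<Rightarrow> ('a \<times> 'a \<times> 'a) set \<Rightarrow> 'a qterm set \<Rightarrow> 'a qterm set \<Rightarrow> 'a qterm set" where
  "MQ_op A C U V = mq_rel A C `` {Op x y | x y. x \<in> U \<and> y \<in> V}"

definition arc_elem :: "'a set \<Rightarrow> ('a \<times> 'a \<times> 'a) set \<Rightarrow> 'a \<Rightarrow> 'a qterm set" where
  "arc_elem A C a = mq_rel A C `` {Gen a}"

definition qbeta :: "'q set \<Rightarrow> ('q \<Rightarrow> 'q \<Rightarrow> 'q) \<Rightarrow> 'q \<Rightarrow> ('q \<Rightarrow> 'q)" where
  "qbeta Q op y = (\<lambda>x\<in>Q. op x y)"

definition Dis :: "'q set \<Rightarrow> ('q \<Rightarrow> 'q \<Rightarrow> 'q) \<Rightarrow> ('q \<Rightarrow> 'q) set" where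
  "Dis Q op = generate (BijGroup Q)
     {qbeta Q op y \<otimes>\<^bsub>BijGroup Q\<^esub> inv\<^bsub>BijGroup Q\<^esub> (qbeta Q op z) | y z. y \<in> Q \<and> z \<in> Q}"

text \<open>Laurent polynomials as the formal Laurent series with finitely many nonzero
  coefficients; t is fls_X.\<close>
definition Lambda :: "int fls ring" where
  "Lambda = \<lparr>carrier = {f. finite {n. fls_nth f n \<noteq> 0}}, monoid.mult = (*), one = 1,
             ring.zero = 0, add = (+)\<rparr>"

text \<open>Dis(MQ(L)) as an abelian group in additive notation (group operation = composition),
  equipped with a given scalar multiplication.\<close>
definition DisMod :: "'q set \<Rightarrow> ('q \<Rightarrow> 'q \<Rightarrow> 'q) \<Rightarrow> (int fls \<Rightarrow> ('q \<Rightarrow> 'q) \<Rightarrow> ('q \<Rightarrow> 'q))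
    \<Rightarrow> (int fls, 'q \<Rightarrow> 'q) module" where
  "DisMod Q op sm = \<lparr>carrier = Dis Q op, monoid.mult = monoid.mult (BijGroup Q), one = one (BijGroup Q),
      ring.zero = one (BijGroup Q), add = monoid.mult (BijGroup Q), module.smult = sm\<rparr>"

end

theory Submission
  imports Defs
begin

text \<open>The translations of a medial quandle satisfy beta_x beta_y^-1 beta_z = beta_z beta_y^-1 beta_x,
  so the displacement group, generated by the quotients beta_x beta_y^-1, is abelian, and every
  beta_u acts on it by conjugation exactly as beta_a* does (beta_u beta_a*^-1 being a displacement).
  Letting t act as conjugation by beta_a* therefore makes Dis a module over Z[t, t^-1].
  A crossing gives beta_a3 = beta_a1 beta_a2 beta_a1^-1, which in terms of d_a = beta_a beta_a*^-1
  and written additively is d_a3 = (1 - t) d_a1 + t d_a2. The same identity, read in both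
  directions, shows that the set of quandle elements x with d_x in a given submodule is closed
  under the quandle operation and its left division; since the arcs generate MQ(L), a submodule
  containing every d_a contains all displacements.\<close>

section \<open>Laurent polynomials\<close>

definition fls_supp :: "int fls \<Rightarrow> int set" where
  "fls_supp f = {n. fls_nth f n \<noteq> 0}"

definition fls_monom :: "int \<Rightarrow> int \<Rightarrow> int fls" where
  "fls_monom c i = fls_shift (-i) (fls_const c)"

lemma fls_nth_monom [simp]: "fls_nth (fls_monom c i) n = (if n = i then c else 0)"
  by (simp add: fls_monom_def)

lemma fls_monom_mult: "fls_monom c i * fls_monom d j = fls_monom (c * d) (i + j)"
  by (simp add: fls_monom_def fls_times_both_shifted_simp add.commute)

lemma fls_nth_monom_mult: "fls_nth (fls_monom c i * f) n = c * fls_nth f (n - i)"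
  by (simp add: fls_monom_def fls_shifted_times_simps)

lemma fls_one_eq_monom: "1 = fls_monom 1 0"
  and fls_of_int_eq_monom: "of_int m = fls_monom m 0"
  and fls_X_eq_monom: "fls_X = fls_monom 1 1"
  and fls_X_intpow_eq_monom: "fls_X_intpow n = fls_monom 1 n"
  and fls_one_minus_X_eq_monom: "1 - fls_X = fls_monom 1 0 + fls_monom (-1) 1"
  by (simp_all add: fls_eq_iff fls_of_int_nth)

lemma fls_supp_zero [simp]: "fls_supp 0 = {}"
  by (simp add: fls_supp_def)

lemma fls_supp_monom: "fls_supp (fls_monom c i) \<subseteq> {i}"
  by (auto simp: fls_supp_def)

lemma finite_fls_supp_monom [simp]: "finite (fls_supp (fls_monom c i))"
  using fls_supp_monom by (rule finite_subset) simp

lemma fls_supp_add: "fls_supp (f + g) \<subseteq> fls_supp f \<union> fls_supp g"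
  by (auto simp: fls_supp_def)

lemma finite_fls_supp_add:
  "finite (fls_supp f) \<Longrightarrow> finite (fls_supp g) \<Longrightarrow> finite (fls_supp (f + g))"
  by (meson finite_UnI finite_subset fls_supp_add)

lemma fls_supp_monom_mult: "fls_supp (fls_monom c i * f) \<subseteq> (\<lambda>n. n + i) ` fls_supp f"
  by (auto simp: fls_supp_def fls_nth_monom_mult image_iff intro!: exI[of _ "_ - i"])

lemma fls_supp_induct [consumes 1, case_names zero add_monom]:
  assumes "finite (fls_supp f)" and "P 0"
    and "\<And>f c i. finite (fls_supp f) \<Longrightarrow> P f \<Longrightarrow> P (f + fls_monom c i)"
  shows "P f"
proof -
  have "\<forall>f. fls_supp f \<subseteq> S \<longrightarrow> P f" if "finite S" for S
    using that
  proof (induction S rule: finite_induct)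
    case empty
    have "fls_supp f = {} \<Longrightarrow> f = 0" for f
      by (auto simp: fls_supp_def fls_eq_iff)
    then show ?case using assms(2) by auto
  next
    case (insert i S)
    show ?case
    proof (intro allI impI)
      fix f assume f: "fls_supp f \<subseteq> insert i S"
      define g where "g = f - fls_monom (fls_nth f i) i"
      have "fls_supp g \<subseteq> S"
        using f by (auto simp: g_def fls_supp_def)
      then have "P (g + fls_monom (fls_nth f i) i)"
        using insert assms(3) finite_subset by blast
      then show "P f" by (simp add: g_def)
    qed
  qed
  then show ?thesis using assms(1) by blast
qed

lemma finite_fls_supp_mult:
  assumes "finite (fls_supp f)" and "finite (fls_supp g)"
  shows "finite (fls_supp (f * g))"
  using assms(1)
proof (induction f rule: fls_supp_induct)
  case (add_monom f c i)
  have "fls_supp ((f + fls_monom c i) * g) \<subseteq> fls_supp (f * g) \<union> fls_supp (fls_monom c i * g)"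
    by (metis distrib_right fls_supp_add)
  moreover have "finite (fls_supp (fls_monom c i * g))"
    using fls_supp_monom_mult[of c i g] assms(2) by (auto intro: finite_subset)
  ultimately show ?case using add_monom by (auto intro: finite_subset)
qed simp

lemma carrier_Lambda: "carrier Lambda = {f. finite (fls_supp f)}"
  by (simp add: Lambda_def fls_supp_def)

lemma Lambda_simps [simp]:
  "monoid.mult Lambda = (*)" "one Lambda = 1" "ring.zero Lambda = 0" "ring.add Lambda = (+)"
  by (simp_all add: Lambda_def)

lemma fls_monom_in_Lambda [simp]: "fls_monom c i \<in> carrier Lambda"
  by (simp add: carrier_Lambda)

lemma cring_Lambda: "cring Lambda"
proof (rule cringI)
  have "fls_supp (- f) = fls_supp f" for f
    by (simp add: fls_supp_def)
  then show "abelian_group Lambda"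
    by (intro abelian_groupI)
       (auto simp: carrier_Lambda finite_fls_supp_add algebra_simps intro!: exI[of _ "- _"])
  show "comm_monoid Lambda"
    by (rule comm_monoidI)
       (auto simp: carrier_Lambda finite_fls_supp_mult algebra_simps fls_supp_def[of 1])
qed (simp add: carrier_Lambda algebra_simps)

section \<open>Conjugation-closed medial subsets of a group\<close>

lemma (in group) inv_mult_cancel_left [simp]:
  "a \<in> carrier G \<Longrightarrow> x \<in> carrier G \<Longrightarrow> inv a \<otimes> (a \<otimes> x) = x"
  by (simp add: m_assoc[symmetric])

lemma (in group) mult_inv_cancel_left [simp]:
  "a \<in> carrier G \<Longrightarrow> x \<in> carrier G \<Longrightarrow> a \<otimes> (inv a \<otimes> x) = x"
  by (simp add: m_assoc[symmetric])

lemma (in group) generate_commute: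
  assumes "x \<in> carrier G" "S \<subseteq> carrier G" "\<And>s. s \<in> S \<Longrightarrow> s \<otimes> x = x \<otimes> s"
    and "g \<in> generate G S"
  shows "g \<otimes> x = x \<otimes> g"
  using assms(4)
proof (induction rule: generate.induct)
  case (inv h)
  then have h: "h \<in> carrier G" using assms(2) by auto
  have "inv h \<otimes> (h \<otimes> x) \<otimes> inv h = inv h \<otimes> (x \<otimes> h) \<otimes> inv h"
    using inv assms(3) by simp
  then show ?case using h assms(1) by (simp add: m_assoc)
next
  case (eng h1 h2)
  have c: "h1 \<in> carrier G" "h2 \<in> carrier G"
    using eng generate_in_carrier assms(2) by auto
  have "h1 \<otimes> h2 \<otimes> x = h1 \<otimes> (x \<otimes> h2)" using eng c assms by (simp add: m_assoc)
  also have "\<dots> = x \<otimes> h1 \<otimes> h2" using eng c assms by (simp add: m_assoc[symmetric])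
  finally show ?case using c assms by (simp add: m_assoc)
qed (use assms in auto)

lemma (in group) conj_generate_closed:
  assumes "g \<in> carrier G" "S \<subseteq> carrier G" "\<And>s. s \<in> S \<Longrightarrow> g \<otimes> s \<otimes> inv g \<in> generate G S"
    and "x \<in> generate G S"
  shows "g \<otimes> x \<otimes> inv g \<in> generate G S"
proof -
  let ?c = "\<lambda>x. g \<otimes> x \<otimes> inv g"
  have "group_hom G G ?c"
    using assms(1) by unfold_locales (auto intro!: homI simp: m_assoc)
  then have "?c ` generate G S = generate G (?c ` S)"
    by (simp add: group_hom.generate_img[OF _ assms(2)])
  also have "\<dots> \<subseteq> generate G S"
    using assms(3) by (intro generate_subgroup_incl generate_is_subgroup assms(2)) auto
  finally show ?thesis using assms(4) by blast
qed

text \<open>The translations of a medial quandle form a subset B of its permutation group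
  with these closure properties; the base point b plays the role of the arc a*.\<close>

locale medial_subset = group G for G :: "'g monoid" (structure) +
  fixes B :: "'g set" and b :: 'g
  assumes B_subset: "B \<subseteq> carrier G" and base_in_B: "b \<in> B"
    and conj_in_B: "u \<in> B \<Longrightarrow> x \<in> B \<Longrightarrow> u \<otimes> x \<otimes> inv u \<in> B"
    and inv_conj_in_B: "u \<in> B \<Longrightarrow> x \<in> B \<Longrightarrow> inv u \<otimes> x \<otimes> u \<in> B"
    and B_medial: "x \<in> B \<Longrightarrow> y \<in> B \<Longrightarrow> z \<in> B \<Longrightarrow> x \<otimes> inv y \<otimes> z = z \<otimes> inv y \<otimes> x"
begin

definition disp_gens :: "'g set" where
  "disp_gens = {x \<otimes> inv y | x y. x \<in> B \<and> y \<in> B}"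

definition Disp :: "'g set" where
  "Disp = generate G disp_gens"

definition disp :: "'g \<Rightarrow> 'g" where
  "disp u = u \<otimes> inv b"

lemma B_carrier [simp]: "u \<in> B \<Longrightarrow> u \<in> carrier G"
  using B_subset by auto

lemma base_carrier [simp]: "b \<in> carrier G"
  using base_in_B by simp

lemma disp_gens_carrier: "disp_gens \<subseteq> carrier G"
  by (auto simp: disp_gens_def)

lemma subgroup_Disp: "subgroup Disp G"
  unfolding Disp_def by (rule generate_is_subgroup[OF disp_gens_carrier])

lemma Disp_carrier [simp]: "x \<in> Disp \<Longrightarrow> x \<in> carrier G"
  and Disp_mult [simp]: "x \<in> Disp \<Longrightarrow> y \<in> Disp \<Longrightarrow> x \<otimes> y \<in> Disp"
  and Disp_inv [simp]: "x \<in> Disp \<Longrightarrow> inv x \<in> Disp"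
  and Disp_one [simp]: "\<one> \<in> Disp"
  and Disp_int_pow [simp]: "x \<in> Disp \<Longrightarrow> x [^] (k::int) \<in> Disp"
  by (simp_all add: subgroup.mem_carrier[OF subgroup_Disp] subgroup.m_closed[OF subgroup_Disp]
      subgroup.m_inv_closed[OF subgroup_Disp] subgroup.one_closed[OF subgroup_Disp]
      subgroup_int_pow_closed[OF subgroup_Disp])

lemma quotient_in_Disp: "x \<in> B \<Longrightarrow> y \<in> B \<Longrightarrow> x \<otimes> inv y \<in> Disp"
  unfolding Disp_def disp_gens_def by (rule generate.incl) blast

lemma disp_in_Disp [simp]: "u \<in> B \<Longrightarrow> disp u \<in> Disp"
  unfolding disp_def by (rule quotient_in_Disp[OF _ base_in_B])

lemma B_medial_inv:
  assumes "x \<in> B" "y \<in> B" "z \<in> B"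
  shows "inv x \<otimes> y \<otimes> inv z = inv z \<otimes> y \<otimes> inv x"
proof -
  have "inv (z \<otimes> inv y \<otimes> x) = inv (x \<otimes> inv y \<otimes> z)"
    using B_medial[OF assms(3,2,1)] by simp
  then show ?thesis using assms by (simp add: inv_mult_group m_assoc)
qed

lemma disp_gens_commute:
  assumes "g \<in> disp_gens" "h \<in> disp_gens"
  shows "g \<otimes> h = h \<otimes> g"
proof -
  obtain x y u v where g: "g = x \<otimes> inv y" "x \<in> B" "y \<in> B"
    and h: "h = u \<otimes> inv v" "u \<in> B" "v \<in> B"
    using assms unfolding disp_gens_def by auto
  have "g \<otimes> h = (x \<otimes> inv y \<otimes> u) \<otimes> inv v" using g h by (simp add: m_assoc)
  also have "\<dots> = u \<otimes> (inv y \<otimes> x \<otimes> inv v)" using g h B_medial[of x y u] by (simp add: m_assoc)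
  also have "\<dots> = u \<otimes> (inv v \<otimes> x \<otimes> inv y)" using g h B_medial_inv[of y x v] by simp
  also have "\<dots> = h \<otimes> g" using g h by (simp add: m_assoc)
  finally show ?thesis .
qed

lemma Disp_commute:
  assumes "x \<in> Disp" "y \<in> Disp"
  shows "x \<otimes> y = y \<otimes> x"
proof -
  have "g \<otimes> y = y \<otimes> g" if "g \<in> disp_gens" for g
    using generate_commute[of g disp_gens y] that assms(2) disp_gens_commute disp_gens_carrier
    by (auto simp: Disp_def)
  then show ?thesis
    using generate_commute[of y disp_gens x] assms disp_gens_carrier by (auto simp: Disp_def)
qed

lemma conj_in_Disp:
  assumes "g \<in> carrier G" "\<And>u. u \<in> B \<Longrightarrow> g \<otimes> u \<otimes> inv g \<in> B" "x \<in> Disp"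
  shows "g \<otimes> x \<otimes> inv g \<in> Disp"
  unfolding Disp_def
proof (rule conj_generate_closed[OF assms(1) disp_gens_carrier])
  fix s assume "s \<in> disp_gens"
  then obtain p q where s: "s = p \<otimes> inv q" "p \<in> B" "q \<in> B"
    unfolding disp_gens_def by auto
  have "g \<otimes> s \<otimes> inv g = (g \<otimes> p \<otimes> inv g) \<otimes> inv (g \<otimes> q \<otimes> inv g)"
    using s assms(1) by (simp add: m_assoc inv_mult_group)
  then show "g \<otimes> s \<otimes> inv g \<in> generate G disp_gens"
    using s assms(2) quotient_in_Disp by (simp add: Disp_def)
qed (use assms(3) Disp_def in simp)

lemma B_normalizes_Disp:
  assumes "u \<in> B"
  shows "u \<in> normalizer G Disp"
proof -
  have conj: "u \<otimes> x \<otimes> inv u \<in> Disp" "inv u \<otimes> x \<otimes> u \<in> Disp" if "x \<in> Disp" for x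
    using conj_in_Disp[of u x] conj_in_Disp[of "inv u" x] assms that conj_in_B inv_conj_in_B
    by auto
  have "u <# Disp #> inv u = Disp"
  proof
    show "u <# Disp #> inv u \<subseteq> Disp"
      using conj by (auto simp: l_coset_def r_coset_def)
    show "Disp \<subseteq> u <# Disp #> inv u"
    proof
      fix x assume "x \<in> Disp"
      then have "x = u \<otimes> (inv u \<otimes> x \<otimes> u) \<otimes> inv u" "inv u \<otimes> x \<otimes> u \<in> Disp"
        using assms conj by (simp_all add: m_assoc)
      then show "x \<in> u <# Disp #> inv u"
        unfolding l_coset_def r_coset_def by blast
    qed
  qed
  then show ?thesis
    using assms subgroup.subset[OF subgroup_Disp]
    by (simp add: normalizer_def stabilizer_def)
qed

lemma normalizer_conj_in_Disp:
  assumes "g \<in> normalizer G Disp" "x \<in> Disp"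
  shows "g \<otimes> x \<otimes> inv g \<in> Disp"
proof -
  have "g <# Disp #> inv g = Disp"
    using assms(1) subgroup.subset[OF subgroup_Disp] by (simp add: normalizer_def stabilizer_def)
  then show ?thesis
    using assms(2) unfolding l_coset_def r_coset_def by blast
qed

text \<open>Because u b^-1 lies in the abelian group Disp; this is why the action of t does not
  depend on the choice of the base arc.\<close>

lemma conj_Disp_eq:
  assumes "u \<in> B" "x \<in> Disp"
  shows "u \<otimes> x \<otimes> inv u = b \<otimes> x \<otimes> inv b"
proof -
  define g where "g = u \<otimes> inv b"
  define y where "y = b \<otimes> x \<otimes> inv b"
  have g: "g \<in> Disp" using quotient_in_Disp[OF assms(1) base_in_B] by (simp add: g_def)
  have y: "y \<in> Disp"
    unfolding y_def by (rule normalizer_conj_in_Disp[OF B_normalizes_Disp[OF base_in_B] assms(2)])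
  have "u \<otimes> x \<otimes> inv u = g \<otimes> y \<otimes> inv g"
    using assms by (simp add: g_def y_def m_assoc inv_mult_group)
  also have "\<dots> = y" using Disp_commute[OF g y] g y by (simp add: m_assoc)
  finally show ?thesis by (simp add: y_def)
qed

end

section \<open>The displacement group as a module over Laurent polynomials\<close>

context medial_subset
begin

definition twist :: "int \<Rightarrow> 'g \<Rightarrow> 'g" where
  "twist n x = b [^] n \<otimes> x \<otimes> inv (b [^] n)"

lemma twist_in_Disp [simp]: "x \<in> Disp \<Longrightarrow> twist n x \<in> Disp"
  unfolding twist_def
  by (rule normalizer_conj_in_Disp[OF subgroup_int_pow_closed[OF
        normalizer_imp_subgroup[OF subgroup.subset[OF subgroup_Disp]] B_normalizes_Disp[OF base_in_B]]])

lemma twist_zero [simp]: "x \<in> carrier G \<Longrightarrow> twist 0 x = x"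
  by (simp add: twist_def)

lemma twist_one: "x \<in> carrier G \<Longrightarrow> twist 1 x = b \<otimes> x \<otimes> inv b"
  by (simp add: twist_def)

lemma twist_add: "x \<in> carrier G \<Longrightarrow> twist (m + n) x = twist m (twist n x)"
  by (simp add: twist_def int_pow_mult m_assoc inv_mult_group)

lemma twist_mult: "x \<in> carrier G \<Longrightarrow> y \<in> carrier G \<Longrightarrow> twist n (x \<otimes> y) = twist n x \<otimes> twist n y"
  by (simp add: twist_def m_assoc)

lemma twist_int_pow: "x \<in> carrier G \<Longrightarrow> twist n (x [^] (k::int)) = twist n x [^] k"
proof -
  have "twist n \<in> hom G G"
    by (auto intro!: homI simp: twist_def m_assoc)
  then show "x \<in> carrier G \<Longrightarrow> ?thesis"
    by (simp add: hom_int_pow is_group)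
qed

lemma comm_group_Disp: "comm_group (G\<lparr>carrier := Disp\<rparr>)"
  by (rule group.group_comm_groupI[OF subgroup_imp_group[OF subgroup_Disp]])
     (simp add: Disp_commute)

lemma finprod_Disp_mult:
  assumes "f \<in> A \<rightarrow> Disp" "g \<in> A \<rightarrow> Disp"
  shows "finprod (G\<lparr>carrier := Disp\<rparr>) (\<lambda>n. f n \<otimes> g n) A
    = finprod (G\<lparr>carrier := Disp\<rparr>) f A \<otimes> finprod (G\<lparr>carrier := Disp\<rparr>) g A"
proof -
  interpret D: comm_group "G\<lparr>carrier := Disp\<rparr>" by (rule comm_group_Disp)
  show ?thesis using D.finprod_multf[of f A g] assms by simp
qed

definition lsmult :: "int fls \<Rightarrow> 'g \<Rightarrow> 'g" where
  "lsmult f x = finprod (G\<lparr>carrier := Disp\<rparr>) (\<lambda>n. twist n x [^] fls_nth f n) (fls_supp f)"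

lemma lsmult_expand:
  assumes "finite T" "fls_supp f \<subseteq> T" "x \<in> Disp"
  shows "lsmult f x = finprod (G\<lparr>carrier := Disp\<rparr>) (\<lambda>n. twist n x [^] fls_nth f n) T"
proof -
  interpret D: comm_group "G\<lparr>carrier := Disp\<rparr>" by (rule comm_group_Disp)
  show ?thesis unfolding lsmult_def
    by (rule D.finprod_mono_neutral_cong_right[symmetric]) (use assms in \<open>auto simp: fls_supp_def\<close>)
qed

lemma lsmult_in_Disp [simp]: "x \<in> Disp \<Longrightarrow> lsmult f x \<in> Disp"
proof -
  interpret D: comm_group "G\<lparr>carrier := Disp\<rparr>" by (rule comm_group_Disp)
  show "x \<in> Disp \<Longrightarrow> ?thesis"
    using D.finprod_closed[of "\<lambda>n. twist n x [^] fls_nth f n" "fls_supp f"]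
    by (auto simp: lsmult_def)
qed

lemma lsmult_zero_left [simp]: "lsmult 0 x = \<one>"
proof -
  interpret D: comm_group "G\<lparr>carrier := Disp\<rparr>" by (rule comm_group_Disp)
  show ?thesis by (simp add: lsmult_def)
qed

lemma lsmult_one_right: "lsmult f \<one> = \<one>"
proof -
  interpret D: comm_group "G\<lparr>carrier := Disp\<rparr>" by (rule comm_group_Disp)
  have "finprod (G\<lparr>carrier := Disp\<rparr>) (\<lambda>n. twist n \<one> [^] fls_nth f n) (fls_supp f)
      = \<one>\<^bsub>G\<lparr>carrier := Disp\<rparr>\<^esub>"
    by (rule D.finprod_one_eqI) (simp add: twist_def)
  then show ?thesis by (simp add: lsmult_def)
qed

lemma lsmult_monom: "x \<in> Disp \<Longrightarrow> lsmult (fls_monom c i) x = twist i x [^] c"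
proof -
  interpret D: comm_group "G\<lparr>carrier := Disp\<rparr>" by (rule comm_group_Disp)
  show "x \<in> Disp \<Longrightarrow> ?thesis"
    by (simp add: lsmult_expand[OF _ fls_supp_monom])
qed

lemma lsmult_add_left:
  assumes "finite (fls_supp f)" "finite (fls_supp g)" "x \<in> Disp"
  shows "lsmult (f + g) x = lsmult f x \<otimes> lsmult g x"
proof -
  interpret D: comm_group "G\<lparr>carrier := Disp\<rparr>" by (rule comm_group_Disp)
  define T where "T = fls_supp f \<union> fls_supp g"
  have T: "finite T" "fls_supp f \<subseteq> T" "fls_supp g \<subseteq> T" "fls_supp (f + g) \<subseteq> T"
    using assms fls_supp_add by (auto simp: T_def)
  have "lsmult (f + g) x = finprod (G\<lparr>carrier := Disp\<rparr>)
      (\<lambda>n. twist n x [^] fls_nth f n \<otimes> twist n x [^] fls_nth g n) T"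
    using assms(3) by (simp add: lsmult_expand[OF T(1,4)] int_pow_mult cong: D.finprod_cong)
  also have "\<dots> = lsmult f x \<otimes> lsmult g x"
    unfolding lsmult_expand[OF T(1,2) assms(3)] lsmult_expand[OF T(1,3) assms(3)]
    by (rule finprod_Disp_mult) (use assms(3) in auto)
  finally show ?thesis .
qed

lemma lsmult_mult_right:
  assumes "x \<in> Disp" "y \<in> Disp"
  shows "lsmult f (x \<otimes> y) = lsmult f x \<otimes> lsmult f y"
proof (cases "finite (fls_supp f)")
  case True
  interpret D: comm_group "G\<lparr>carrier := Disp\<rparr>" by (rule comm_group_Disp)
  have "lsmult f (x \<otimes> y) = finprod (G\<lparr>carrier := Disp\<rparr>)
      (\<lambda>n. twist n x [^] fls_nth f n \<otimes> twist n y [^] fls_nth f n) (fls_supp f)"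
    unfolding lsmult_def using assms
    by (intro D.finprod_cong) (auto simp: twist_mult Pi_def int_pow_mult_distrib Disp_commute)
  also have "\<dots> = lsmult f x \<otimes> lsmult f y"
    unfolding lsmult_def by (rule finprod_Disp_mult) (use assms in auto)
  finally show ?thesis .
next
  case False
  then show ?thesis by (simp add: finprod_def lsmult_def)
qed

lemma lsmult_mult_left:
  assumes "finite (fls_supp f)" "finite (fls_supp g)" "x \<in> Disp"
  shows "lsmult (f * g) x = lsmult f (lsmult g x)"
proof -
  have monom_monom: "lsmult (fls_monom c i * fls_monom d j) x = lsmult (fls_monom c i) (lsmult (fls_monom d j) x)"
    for c d i j
    using assms(3)
    by (simp add: fls_monom_mult lsmult_monom twist_int_pow twist_add int_pow_pow mult.commute)
  have monom: "lsmult (fls_monom c i * g) x = lsmult (fls_monom c i) (lsmult g x)" for c i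
    using assms(2)
  proof (induction g rule: fls_supp_induct)
    case (add_monom g d j)
    have "lsmult (fls_monom c i * (g + fls_monom d j)) x
        = lsmult (fls_monom c i * g) x \<otimes> lsmult (fls_monom c i * fls_monom d j) x"
      using add_monom assms(3)
      by (simp add: distrib_left lsmult_add_left finite_fls_supp_mult)
    then show ?case
      using add_monom assms(3) by (simp add: monom_monom lsmult_mult_right lsmult_add_left)
  qed (simp add: lsmult_one_right)
  show ?thesis
    using assms(1)
  proof (induction f rule: fls_supp_induct)
    case (add_monom f c i)
    then show ?case
      using assms by (simp add: distrib_right lsmult_add_left finite_fls_supp_mult monom)
  qed simp
qed

definition Disp_module :: "(int fls, 'g) module" where
  "Disp_module = \<lparr>carrier = Disp, monoid.mult = monoid.mult G, one = one G,
      ring.zero = one G, add = monoid.mult G, module.smult = lsmult\<rparr>"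

lemma Disp_module_simps [simp]:
  "carrier Disp_module = Disp" "ring.zero Disp_module = \<one>" "ring.add Disp_module = (\<otimes>)"
  "module.smult Disp_module = lsmult"
  by (simp_all add: Disp_module_def)

lemma abelian_group_Disp_module: "abelian_group Disp_module"
proof (rule abelian_groupI)
  fix x y assume "x \<in> carrier Disp_module" "y \<in> carrier Disp_module"
  then show "x \<oplus>\<^bsub>Disp_module\<^esub> y = y \<oplus>\<^bsub>Disp_module\<^esub> x"
    by (simp add: Disp_commute)
next
  fix x assume "x \<in> carrier Disp_module"
  then show "\<exists>y\<in>carrier Disp_module. y \<oplus>\<^bsub>Disp_module\<^esub> x = \<zero>\<^bsub>Disp_module\<^esub>"
    by (intro bexI[of _ "inv x"]) simp_all
qed (simp_all add: m_assoc)

lemma module_Disp_module: "module Lambda Disp_module"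
  by (rule moduleI[OF cring_Lambda abelian_group_Disp_module])
     (simp_all add: carrier_Lambda lsmult_add_left lsmult_mult_left lsmult_mult_right
        fls_one_eq_monom lsmult_monom)

lemma Disp_module_minus: "x \<in> Disp \<Longrightarrow> y \<in> Disp \<Longrightarrow> x \<ominus>\<^bsub>Disp_module\<^esub> y = x \<otimes> inv y"
  using abelian_group.minus_equality[OF abelian_group_Disp_module, of "inv y" y]
  by (simp add: a_minus_def)

lemma disp_conj:
  assumes u: "u \<in> B" and v: "v \<in> B"
  shows "disp (u \<otimes> v \<otimes> inv u) = disp u \<otimes> inv (twist 1 (disp u)) \<otimes> twist 1 (disp v)"
proof -
  have c: "u \<in> carrier G" "v \<in> carrier G" using u v by auto
  have "inv u \<in> normalizer G Disp"
    using B_normalizes_Disp[OF u] normalizer_imp_subgroup[OF subgroup.subset[OF subgroup_Disp]]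
    by (rule subgroup.m_inv_closed[rotated])
  then have x: "inv u \<otimes> (v \<otimes> inv u) \<otimes> u \<in> Disp"
    using normalizer_conj_in_Disp[of "inv u" "v \<otimes> inv u"] quotient_in_Disp[OF v u] c by simp
  have e: "v \<otimes> inv u = b \<otimes> (inv u \<otimes> (v \<otimes> inv b))"
    using conj_Disp_eq[OF u x] c by (simp add: m_assoc)
  have commute: "b \<otimes> (inv u \<otimes> (v \<otimes> z)) = v \<otimes> (inv u \<otimes> (b \<otimes> z))" if "z \<in> carrier G" for z
  proof -
    have "b \<otimes> (inv u \<otimes> (v \<otimes> z)) = b \<otimes> (inv u \<otimes> (v \<otimes> inv b)) \<otimes> (b \<otimes> z)"
      using c that by (simp add: m_assoc)
    then show ?thesis using c that by (simp add: e[symmetric] m_assoc)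
  qed
  have "disp u \<otimes> inv (twist 1 (disp u)) \<otimes> twist 1 (disp v)
      = u \<otimes> (b \<otimes> (inv u \<otimes> (v \<otimes> (inv b \<otimes> inv b))))"
    using c by (simp add: disp_def twist_one m_assoc inv_mult_group)
  also have "\<dots> = disp (u \<otimes> v \<otimes> inv u)"
    using c by (simp add: commute disp_def m_assoc)
  finally show ?thesis ..
qed

lemma lsmult_one_minus_X: "x \<in> Disp \<Longrightarrow> lsmult (1 - fls_X) x = x \<otimes> inv (twist 1 x)"
  by (simp add: fls_one_minus_X_eq_monom lsmult_add_left lsmult_monom int_pow_neg)

lemma lsmult_X: "x \<in> Disp \<Longrightarrow> lsmult fls_X x = twist 1 x"
  by (simp add: fls_X_eq_monom lsmult_monom)

lemma lsmult_of_int: "x \<in> Disp \<Longrightarrow> lsmult (of_int m) x = x [^] m"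
  by (simp add: fls_of_int_eq_monom lsmult_monom)

lemma lsmult_X_intpow: "x \<in> Disp \<Longrightarrow> lsmult (fls_X_intpow n) x = twist n x"
  by (simp add: fls_X_intpow_eq_monom lsmult_monom)

lemma crossing_relation:
  assumes "u \<in> B" "v \<in> B"
  shows "(lsmult (1 - fls_X) (disp u) \<oplus>\<^bsub>Disp_module\<^esub> lsmult fls_X (disp v))
      \<ominus>\<^bsub>Disp_module\<^esub> disp (u \<otimes> v \<otimes> inv u) = \<zero>\<^bsub>Disp_module\<^esub>"
  using assms conj_in_B[OF assms]
  by (simp add: lsmult_one_minus_X lsmult_X Disp_module_minus disp_conj[symmetric])

lemma submodule_Disp_module_closed:
  assumes "submodule N Lambda Disp_module"
  shows "N \<subseteq> Disp" and "\<one> \<in> N" and "x \<in> N \<Longrightarrow> y \<in> N \<Longrightarrow> x \<otimes> y \<in> N"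
    and "x \<in> N \<Longrightarrow> inv x \<in> N" and "x \<in> N \<Longrightarrow> twist n x \<in> N"
proof -
  interpret M: module Lambda Disp_module by (rule module_Disp_module)
  note closed = M.submoduleE[OF assms]
  show N: "N \<subseteq> Disp" using closed(1) by simp
  show "\<one> \<in> N"
    using subgroup.one_closed[OF submodule.axioms(1)[OF assms]] by simp
  show "x \<in> N \<Longrightarrow> y \<in> N \<Longrightarrow> x \<otimes> y \<in> N" using closed(5) by simp
  show "x \<in> N \<Longrightarrow> inv x \<in> N"
    using closed(3)[of x] N abelian_group.minus_equality[OF abelian_group_Disp_module, of "inv x" x]
    by auto
  show "x \<in> N \<Longrightarrow> twist n x \<in> N"
    using closed(4)[OF fls_monom_in_Lambda, of x 1 n] N by (auto simp: lsmult_monom)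
qed

lemma disp_conj_in_submodule:
  assumes "submodule N Lambda Disp_module" "u \<in> B" "v \<in> B" "disp u \<in> N" "disp v \<in> N"
  shows "disp (u \<otimes> v \<otimes> inv u) \<in> N"
  using submodule_Disp_module_closed[OF assms(1)] assms(4,5) by (simp add: disp_conj[OF assms(2,3)])

lemma disp_in_submodule_cancel:
  assumes N: "submodule N Lambda Disp_module" and "u \<in> B" "v \<in> B"
    and "disp u \<in> N" "disp (u \<otimes> v \<otimes> inv u) \<in> N"
  shows "disp v \<in> N"
proof -
  note closed = submodule_Disp_module_closed[OF N]
  have "disp (u \<otimes> v \<otimes> inv u) = (disp u \<otimes> inv (twist 1 (disp u))) \<otimes> twist 1 (disp v)"
    using assms(2,3) by (simp add: disp_conj)
  then have "twist 1 (disp v) = inv (disp u \<otimes> inv (twist 1 (disp u))) \<otimes> disp (u \<otimes> v \<otimes> inv u)"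
    using assms(2,3) by simp
  then have "twist 1 (disp v) \<in> N"
    using closed assms(4,5) by simp
  then have "twist (-1) (twist 1 (disp v)) \<in> N"
    using closed(5) by blast
  then show ?thesis using assms(3) by (simp add: twist_add[symmetric])
qed

lemma Disp_subset_submodule:
  assumes N: "submodule N Lambda Disp_module" and disp_B: "\<And>u. u \<in> B \<Longrightarrow> disp u \<in> N"
  shows "Disp \<subseteq> N"
proof
  note closed = submodule_Disp_module_closed[OF N]
  fix x assume "x \<in> Disp"
  then show "x \<in> N" unfolding Disp_def
  proof (induction rule: generate.induct)
    case (incl h)
    then obtain p q where "h = disp p \<otimes> inv (disp q)" "p \<in> B" "q \<in> B"
      by (auto simp: disp_gens_def disp_def inv_mult_group m_assoc)
    then show ?case using closed disp_B by simp
  next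
    case (inv h)
    then obtain p q where "inv h = disp q \<otimes> inv (disp p)" "p \<in> B" "q \<in> B"
      by (auto simp: disp_gens_def disp_def inv_mult_group m_assoc)
    then show ?case using closed disp_B by simp
  qed (use closed in simp_all)
qed

end

locale medial_quandle =
  fixes Q :: "'q set" and op :: "'q \<Rightarrow> 'q \<Rightarrow> 'q"
  assumes op_closed: "x \<in> Q \<Longrightarrow> y \<in> Q \<Longrightarrow> op x y \<in> Q"
    and right_bij: "y \<in> Q \<Longrightarrow> bij_betw (\<lambda>x. op x y) Q Q"
    and right_distrib: "x \<in> Q \<Longrightarrow> y \<in> Q \<Longrightarrow> z \<in> Q \<Longrightarrow> op (op x y) z = op (op x z) (op y z)"
    and medial: "w \<in> Q \<Longrightarrow> x \<in> Q \<Longrightarrow> y \<in> Q \<Longrightarrow> z \<in> Q \<Longrightarrow>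
      op (op w x) (op y z) = op (op w y) (op x z)"
begin

lemma qbeta_in_Bij: "y \<in> Q \<Longrightarrow> qbeta Q op y \<in> Bij Q"
  by (simp add: Bij_def qbeta_def right_bij)

lemma qbeta_carrier [simp]: "y \<in> Q \<Longrightarrow> qbeta Q op y \<in> carrier (BijGroup Q)"
  by (simp add: BijGroup_def qbeta_in_Bij)

lemma mult_BijGroup_qbeta:
  "y \<in> Q \<Longrightarrow> z \<in> Q \<Longrightarrow>
    qbeta Q op y \<otimes>\<^bsub>BijGroup Q\<^esub> qbeta Q op z = compose Q (qbeta Q op y) (qbeta Q op z)"
  by (simp add: BijGroup_def qbeta_in_Bij)

lemma qbeta_mult:
  assumes "y \<in> Q" "z \<in> Q"
  shows "qbeta Q op y \<otimes>\<^bsub>BijGroup Q\<^esub> qbeta Q op z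
    = qbeta Q op (op z y) \<otimes>\<^bsub>BijGroup Q\<^esub> qbeta Q op y"
proof -
  have "compose Q (qbeta Q op y) (qbeta Q op z) = compose Q (qbeta Q op (op z y)) (qbeta Q op y)"
    using assms by (intro ext) (simp add: compose_def qbeta_def op_closed right_distrib[of _ z y])
  then show ?thesis using assms by (simp add: mult_BijGroup_qbeta op_closed)
qed

lemma qbeta_conj:
  assumes "y \<in> Q" "z \<in> Q"
  shows "qbeta Q op y \<otimes>\<^bsub>BijGroup Q\<^esub> qbeta Q op z \<otimes>\<^bsub>BijGroup Q\<^esub> inv\<^bsub>BijGroup Q\<^esub> qbeta Q op y
    = qbeta Q op (op z y)"
proof -
  interpret group "BijGroup Q" by (rule group_BijGroup)
  show ?thesis using qbeta_mult[OF assms] assms op_closed by (simp add: m_assoc)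
qed

lemma qbeta_inv_conj:
  assumes "y \<in> Q" "z \<in> Q"
  shows "inv\<^bsub>BijGroup Q\<^esub> qbeta Q op y \<otimes>\<^bsub>BijGroup Q\<^esub> qbeta Q op z \<otimes>\<^bsub>BijGroup Q\<^esub> qbeta Q op y
    \<in> qbeta Q op ` Q"
proof -
  interpret group "BijGroup Q" by (rule group_BijGroup)
  have "z \<in> (\<lambda>x. op x y) ` Q"
    using right_bij[OF assms(1)] assms(2) by (simp add: bij_betw_def)
  then obtain x where x: "x \<in> Q" "op x y = z" by blast
  have e: "qbeta Q op y \<otimes>\<^bsub>BijGroup Q\<^esub> qbeta Q op x = qbeta Q op z \<otimes>\<^bsub>BijGroup Q\<^esub> qbeta Q op y"
    using qbeta_mult[OF assms(1) x(1)] x(2) by simp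
  have "inv\<^bsub>BijGroup Q\<^esub> qbeta Q op y \<otimes>\<^bsub>BijGroup Q\<^esub> qbeta Q op z \<otimes>\<^bsub>BijGroup Q\<^esub> qbeta Q op y
      = qbeta Q op x"
    using assms x by (simp add: m_assoc e[symmetric] del: inv_BijGroup)
  then show ?thesis using x by auto
qed

lemma qbeta_medial:
  assumes x: "x \<in> Q" and y: "y \<in> Q" and z: "z \<in> Q"
  shows "qbeta Q op x \<otimes>\<^bsub>BijGroup Q\<^esub> inv\<^bsub>BijGroup Q\<^esub> qbeta Q op y \<otimes>\<^bsub>BijGroup Q\<^esub> qbeta Q op z
    = qbeta Q op z \<otimes>\<^bsub>BijGroup Q\<^esub> inv\<^bsub>BijGroup Q\<^esub> qbeta Q op y \<otimes>\<^bsub>BijGroup Q\<^esub> qbeta Q op x"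
    (is "?l = ?r")
proof -
  interpret group "BijGroup Q" by (rule group_BijGroup)
  have right_translations: "qbeta Q op (op y z) \<otimes>\<^bsub>BijGroup Q\<^esub> qbeta Q op x
      = qbeta Q op (op x z) \<otimes>\<^bsub>BijGroup Q\<^esub> qbeta Q op y"
    if "x \<in> Q" "y \<in> Q" "z \<in> Q" for x y z
  proof -
    have "compose Q (qbeta Q op (op y z)) (qbeta Q op x) = compose Q (qbeta Q op (op x z)) (qbeta Q op y)"
      using that by (intro ext) (simp add: compose_def qbeta_def op_closed medial[of _ x y z])
    then show ?thesis using that by (simp add: mult_BijGroup_qbeta op_closed)
  qed
  have "qbeta Q op y \<otimes>\<^bsub>BijGroup Q\<^esub> ?l = qbeta Q op (op x y) \<otimes>\<^bsub>BijGroup Q\<^esub> qbeta Q op z"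
    using x y z by (simp add: qbeta_conj[OF y x, symmetric] m_assoc del: inv_BijGroup)
  also have "\<dots> = qbeta Q op (op z y) \<otimes>\<^bsub>BijGroup Q\<^esub> qbeta Q op x"
    using right_translations[OF z x y] .
  also have "\<dots> = qbeta Q op y \<otimes>\<^bsub>BijGroup Q\<^esub> ?r"
    using x y z by (simp add: qbeta_conj[OF y z, symmetric] m_assoc del: inv_BijGroup)
  finally show ?thesis
    using x y z by (simp del: inv_BijGroup)
qed

end


locale based_medial_quandle = medial_quandle +
  fixes e :: 'q
  assumes base_in_Q: "e \<in> Q"

sublocale based_medial_quandle \<subseteq> medial_subset "BijGroup Q" "qbeta Q op ` Q" "qbeta Q op e"
proof (rule medial_subset.intro[OF group_BijGroup], unfold_locales)
  show "qbeta Q op ` Q \<subseteq> carrier (BijGroup Q)" by auto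
  show "qbeta Q op e \<in> qbeta Q op ` Q" using base_in_Q by simp
next
  fix u x assume "u \<in> qbeta Q op ` Q" "x \<in> qbeta Q op ` Q"
  then show "u \<otimes>\<^bsub>BijGroup Q\<^esub> x \<otimes>\<^bsub>BijGroup Q\<^esub> inv\<^bsub>BijGroup Q\<^esub> u \<in> qbeta Q op ` Q"
    and "inv\<^bsub>BijGroup Q\<^esub> u \<otimes>\<^bsub>BijGroup Q\<^esub> x \<otimes>\<^bsub>BijGroup Q\<^esub> u \<in> qbeta Q op ` Q"
    using qbeta_inv_conj by (auto simp: qbeta_conj op_closed simp del: inv_BijGroup)
next
  fix x y z assume "x \<in> qbeta Q op ` Q" "y \<in> qbeta Q op ` Q" "z \<in> qbeta Q op ` Q"
  then show "x \<otimes>\<^bsub>BijGroup Q\<^esub> inv\<^bsub>BijGroup Q\<^esub> y \<otimes>\<^bsub>BijGroup Q\<^esub> z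
      = z \<otimes>\<^bsub>BijGroup Q\<^esub> inv\<^bsub>BijGroup Q\<^esub> y \<otimes>\<^bsub>BijGroup Q\<^esub> x"
    using qbeta_medial by (auto simp del: inv_BijGroup)
qed

definition generates_quandle :: "'q set \<Rightarrow> ('q \<Rightarrow> 'q \<Rightarrow> 'q) \<Rightarrow> 'q set \<Rightarrow> bool" where
  "generates_quandle Q op Y \<longleftrightarrow> (\<forall>S. Y \<subseteq> S \<longrightarrow> (\<forall>x\<in>S. \<forall>y\<in>S. op x y \<in> S)
     \<longrightarrow> (\<forall>x\<in>Q. \<forall>y\<in>S. op x y \<in> S \<longrightarrow> x \<in> S) \<longrightarrow> Q \<subseteq> S)"

context based_medial_quandle
begin

lemma Dis_eq_Disp: "Dis Q op = Disp"
  unfolding Dis_def Disp_def disp_gens_def by (rule arg_cong[where f = "generate _"]) auto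

lemma DisMod_eq_Disp_module: "DisMod Q op lsmult = Disp_module"
  by (simp add: DisMod_def Disp_module_def Dis_eq_Disp)

lemma crossing_relation_qbeta:
  assumes "x \<in> Q" "y \<in> Q"
  shows "(lsmult (1 - fls_X) (disp (qbeta Q op x)) \<oplus>\<^bsub>Disp_module\<^esub> lsmult fls_X (disp (qbeta Q op y)))
      \<ominus>\<^bsub>Disp_module\<^esub> disp (qbeta Q op (op y x)) = \<zero>\<^bsub>Disp_module\<^esub>"
  using crossing_relation[of "qbeta Q op x" "qbeta Q op y"] assms by (simp add: qbeta_conj)

lemma Dis_subset_submodule:
  assumes gen: "generates_quandle Q op Y" and "Y \<subseteq> Q"
    and N: "submodule N Lambda Disp_module" and disp_Y: "\<And>x. x \<in> Y \<Longrightarrow> disp (qbeta Q op x) \<in> N"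
  shows "Dis Q op \<subseteq> N"
proof -
  let ?S = "{x \<in> Q. disp (qbeta Q op x) \<in> N}"
  have "Q \<subseteq> ?S"
    using gen unfolding generates_quandle_def
  proof (elim allE impE)
    show "Y \<subseteq> ?S" using assms(2) disp_Y by auto
    show "\<forall>x\<in>?S. \<forall>y\<in>?S. op x y \<in> ?S"
      using disp_conj_in_submodule[OF N] by (auto simp: op_closed qbeta_conj[symmetric])
    show "\<forall>x\<in>Q. \<forall>y\<in>?S. op x y \<in> ?S \<longrightarrow> x \<in> ?S"
      using disp_in_submodule_cancel[OF N] by (auto simp: qbeta_conj[symmetric])
  qed
  then have "\<And>u. u \<in> qbeta Q op ` Q \<Longrightarrow> disp u \<in> N" by auto
  then show ?thesis using Disp_subset_submodule[OF N] by (simp add: Dis_eq_Disp)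
qed

end

section \<open>The medial quandle of a link diagram\<close>

lemma qterms_simps [simp]:
  "Gen a \<in> qterms A \<longleftrightarrow> a \<in> A"
  "Op x y \<in> qterms A \<longleftrightarrow> x \<in> qterms A \<and> y \<in> qterms A"
  "LOp x y \<in> qterms A \<longleftrightarrow> x \<in> qterms A \<and> y \<in> qterms A"
  by (auto simp: qterms_def)

lemma equiv_mq_rel: "equiv (qterms A) (mq_rel A C)"
proof (rule equivI)
  have "(x, y) \<in> mq_rel A C \<Longrightarrow> x \<in> qterms A \<and> y \<in> qterms A" for x y
    by (induction rule: mq_rel.induct) auto
  then show "mq_rel A C \<subseteq> qterms A \<times> qterms A" by auto
  show "refl_on (qterms A) (mq_rel A C)" by (rule refl_onI) (rule mq_rel.refl)
  show "sym (mq_rel A C)" by (rule symI) (rule mq_rel.sym)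
  show "trans (mq_rel A C)" by (rule transI) (rule mq_rel.trans)
qed

lemma mq_rel_class_eq_iff:
  "x \<in> qterms A \<Longrightarrow> y \<in> qterms A \<Longrightarrow>
    mq_rel A C `` {x} = mq_rel A C `` {y} \<longleftrightarrow> (x, y) \<in> mq_rel A C"
  by (rule eq_equiv_class_iff[OF equiv_mq_rel])

lemma MQ_iff: "U \<in> MQ A C \<longleftrightarrow> (\<exists>x\<in>qterms A. U = mq_rel A C `` {x})"
  by (auto simp: MQ_def quotient_def)

lemma mq_rel_class_in_MQ [simp]: "x \<in> qterms A \<Longrightarrow> mq_rel A C `` {x} \<in> MQ A C"
  by (auto simp: MQ_iff)

lemma MQ_op_class:
  assumes "x \<in> qterms A" "y \<in> qterms A"
  shows "MQ_op A C (mq_rel A C `` {x}) (mq_rel A C `` {y}) = mq_rel A C `` {Op x y}"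
proof
  show "MQ_op A C (mq_rel A C `` {x}) (mq_rel A C `` {y}) \<subseteq> mq_rel A C `` {Op x y}"
  proof
    fix z assume "z \<in> MQ_op A C (mq_rel A C `` {x}) (mq_rel A C `` {y})"
    then obtain x' y' where "(x, x') \<in> mq_rel A C" "(y, y') \<in> mq_rel A C" "(Op x' y', z) \<in> mq_rel A C"
      unfolding MQ_op_def by auto
    then show "z \<in> mq_rel A C `` {Op x y}"
      by (meson ImageI singletonI mq_rel.cong_Op mq_rel.trans)
  qed
  show "mq_rel A C `` {Op x y} \<subseteq> MQ_op A C (mq_rel A C `` {x}) (mq_rel A C `` {y})"
    using assms mq_rel.refl[of x A C] mq_rel.refl[of y A C] unfolding MQ_op_def by auto
qed

lemma MQ_op_class_LOp:
  "x \<in> qterms A \<Longrightarrow> y \<in> qterms A \<Longrightarrow>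
    MQ_op A C (mq_rel A C `` {LOp x y}) (mq_rel A C `` {y}) = mq_rel A C `` {x}"
  by (simp add: MQ_op_class mq_rel_class_eq_iff mq_rel.inv1)

lemma MQ_op_closed:
  assumes "U \<in> MQ A C" "V \<in> MQ A C"
  shows "MQ_op A C U V \<in> MQ A C"
proof -
  obtain x y where "x \<in> qterms A" "U = mq_rel A C `` {x}" "y \<in> qterms A" "V = mq_rel A C `` {y}"
    using assms by (auto simp: MQ_iff)
  then show ?thesis by (simp add: MQ_op_class)
qed

lemma MQ_right_bij:
  assumes "V \<in> MQ A C"
  shows "bij_betw (\<lambda>U. MQ_op A C U V) (MQ A C) (MQ A C)"
proof -
  obtain y where y: "y \<in> qterms A" "V = mq_rel A C `` {y}"
    using assms by (auto simp: MQ_iff)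
  show ?thesis
  proof (rule bij_betw_imageI)
    show "inj_on (\<lambda>U. MQ_op A C U V) (MQ A C)"
    proof (rule inj_onI)
      fix U U' assume U: "U \<in> MQ A C" and U': "U' \<in> MQ A C"
        and eq: "MQ_op A C U V = MQ_op A C U' V"
      obtain x where x: "x \<in> qterms A" "U = mq_rel A C `` {x}"
        using U by (auto simp: MQ_iff)
      obtain x' where x': "x' \<in> qterms A" "U' = mq_rel A C `` {x'}"
        using U' by (auto simp: MQ_iff)
      have "(Op x y, Op x' y) \<in> mq_rel A C"
        using eq x x' y by (simp add: MQ_op_class mq_rel_class_eq_iff)
      then have "(LOp (Op x y) y, LOp (Op x' y) y) \<in> mq_rel A C"
        using y by (simp add: mq_rel.cong_LOp mq_rel.refl)
      then have "(x, x') \<in> mq_rel A C"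
        using x x' y by (meson mq_rel.inv2 mq_rel.sym mq_rel.trans)
      then show "U = U'" using x x' by (simp add: mq_rel_class_eq_iff)
    qed
    have "mq_rel A C `` {z} \<in> (\<lambda>U. MQ_op A C U V) ` MQ A C" if "z \<in> qterms A" for z
      using MQ_op_class_LOp[OF that y(1), of C] that y by (auto intro!: image_eqI)
    then show "(\<lambda>U. MQ_op A C U V) ` MQ A C = MQ A C"
      using MQ_op_closed[OF _ assms] by (auto simp: MQ_iff[of _ A C])
  qed
qed

lemma medial_quandle_MQ: "medial_quandle (MQ A C) (MQ_op A C)"
proof
  fix w x y z assume "w \<in> MQ A C" "x \<in> MQ A C" "y \<in> MQ A C" "z \<in> MQ A C"
  then obtain s t u v where "s \<in> qterms A" "t \<in> qterms A" "u \<in> qterms A" "v \<in> qterms A"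
    "w = mq_rel A C `` {s}" "x = mq_rel A C `` {t}" "y = mq_rel A C `` {u}" "z = mq_rel A C `` {v}"
    by (auto simp: MQ_iff)
  then show "MQ_op A C (MQ_op A C w x) (MQ_op A C y z) = MQ_op A C (MQ_op A C w y) (MQ_op A C x z)"
    by (simp add: MQ_op_class mq_rel_class_eq_iff mq_rel.medial)
next
  fix x y z assume "x \<in> MQ A C" "y \<in> MQ A C" "z \<in> MQ A C"
  then obtain t u v where "t \<in> qterms A" "u \<in> qterms A" "v \<in> qterms A"
    "x = mq_rel A C `` {t}" "y = mq_rel A C `` {u}" "z = mq_rel A C `` {v}"
    by (auto simp: MQ_iff)
  then show "MQ_op A C (MQ_op A C x y) z = MQ_op A C (MQ_op A C x z) (MQ_op A C y z)"
    by (simp add: MQ_op_class mq_rel_class_eq_iff mq_rel.distr)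
next
  fix x y assume "x \<in> MQ A C" "y \<in> MQ A C"
  then show "MQ_op A C x y \<in> MQ A C" by (rule MQ_op_closed)
qed (rule MQ_right_bij)

lemma arc_elem_in_MQ [simp]: "a \<in> A \<Longrightarrow> arc_elem A C a \<in> MQ A C"
  by (simp add: arc_elem_def)

lemma MQ_op_arc_elem_crossing:
  assumes "diagram A C" "(a1, a2, a3) \<in> C"
  shows "MQ_op A C (arc_elem A C a2) (arc_elem A C a1) = arc_elem A C a3"
proof -
  have "a1 \<in> A" "a2 \<in> A" "a3 \<in> A"
    using assms by (auto simp: diagram_def)
  then show ?thesis
    using mq_rel.crossing[OF assms(2)]
    by (simp add: arc_elem_def MQ_op_class mq_rel_class_eq_iff)
qed

lemma generates_quandle_arcs: "generates_quandle (MQ A C) (MQ_op A C) (arc_elem A C ` A)"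
  unfolding generates_quandle_def
proof (intro allI impI subsetI)
  fix S U
  assume arcs: "arc_elem A C ` A \<subseteq> S" and op: "\<forall>x\<in>S. \<forall>y\<in>S. MQ_op A C x y \<in> S"
    and div: "\<forall>x\<in>MQ A C. \<forall>y\<in>S. MQ_op A C x y \<in> S \<longrightarrow> x \<in> S" and "U \<in> MQ A C"
  have "t \<in> qterms A \<Longrightarrow> mq_rel A C `` {t} \<in> S" for t
  proof (induction t)
    case (Gen a)
    then show ?case using arcs by (auto simp: arc_elem_def)
  next
    case (Op t1 t2)
    then have "MQ_op A C (mq_rel A C `` {t1}) (mq_rel A C `` {t2}) \<in> S"
      using op by simp
    then show ?case using Op.prems by (simp add: MQ_op_class)
  next
    case (LOp t1 t2)
    then have "MQ_op A C (mq_rel A C `` {LOp t1 t2}) (mq_rel A C `` {t2}) \<in> S"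
      by (simp add: MQ_op_class_LOp)
    moreover have "mq_rel A C `` {LOp t1 t2} \<in> MQ A C" "mq_rel A C `` {t2} \<in> S"
      using LOp by simp_all
    ultimately show ?case
      using div by blast
  qed
  then show "U \<in> S" using \<open>U \<in> MQ A C\<close> by (auto simp: MQ_iff)
qed

theorem proposition29:
  fixes A :: "'a set" and C :: "('a \<times> 'a \<times> 'a) set" and astar :: 'a
  assumes "diagram A C" and "astar \<in> A"
  defines "Q \<equiv> MQ A C" and "G \<equiv> BijGroup (MQ A C)"
  defines "\<beta> \<equiv> (\<lambda>a. qbeta (MQ A C) (MQ_op A C) (arc_elem A C a))"
  defines "d \<equiv> (\<lambda>a. \<beta> a \<otimes>\<^bsub>G\<^esub> inv\<^bsub>G\<^esub> (\<beta> astar))"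
  shows "\<exists>sm. module Lambda (DisMod Q (MQ_op A C) sm)
     \<and> (\<forall>m::int. \<forall>x \<in> Dis Q (MQ_op A C). sm (of_int m) x = x [^]\<^bsub>G\<^esub> m)
     \<and> (\<forall>n::int. \<forall>x \<in> Dis Q (MQ_op A C).
          sm (fls_X_intpow n) x = (\<beta> astar [^]\<^bsub>G\<^esub> n) \<otimes>\<^bsub>G\<^esub> x \<otimes>\<^bsub>G\<^esub> inv\<^bsub>G\<^esub> (\<beta> astar [^]\<^bsub>G\<^esub> n))
     \<and> (\<forall>(a1, a2, a3) \<in> C.
          (sm (1 - fls_X) (d a1) \<oplus>\<^bsub>DisMod Q (MQ_op A C) sm\<^esub> sm fls_X (d a2))
            \<ominus>\<^bsub>DisMod Q (MQ_op A C) sm\<^esub> d a3 = \<zero>\<^bsub>DisMod Q (MQ_op A C) sm\<^esub>)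
     \<and> (\<forall>N. submodule N Lambda (DisMod Q (MQ_op A C) sm) \<and> d ` A \<subseteq> N
          \<longrightarrow> Dis Q (MQ_op A C) \<subseteq> N)"
proof -
  interpret M: based_medial_quandle "MQ A C" "MQ_op A C" "arc_elem A C astar"
    by (intro based_medial_quandle.intro based_medial_quandle_axioms.intro medial_quandle_MQ
        arc_elem_in_MQ assms(2))
  have Dis: "Dis Q (MQ_op A C) = M.Disp"
    and Mod: "DisMod Q (MQ_op A C) M.lsmult = M.Disp_module"
    unfolding Q_def by (rule M.Dis_eq_Disp M.DisMod_eq_Disp_module)+
  have d: "d a = M.disp (\<beta> a)" for a
    by (simp add: d_def M.disp_def G_def \<beta>_def)
  show ?thesis
  proof (intro exI[of _ M.lsmult], unfold Mod Dis, intro conjI)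
    show "module Lambda M.Disp_module" by (rule M.module_Disp_module)
    show "\<forall>m::int. \<forall>x \<in> M.Disp. M.lsmult (of_int m) x = x [^]\<^bsub>G\<^esub> m"
      using M.lsmult_of_int by (simp add: G_def)
    show "\<forall>n::int. \<forall>x \<in> M.Disp. M.lsmult (fls_X_intpow n) x
        = \<beta> astar [^]\<^bsub>G\<^esub> n \<otimes>\<^bsub>G\<^esub> x \<otimes>\<^bsub>G\<^esub> inv\<^bsub>G\<^esub> (\<beta> astar [^]\<^bsub>G\<^esub> n)"
      using M.lsmult_X_intpow by (simp add: M.twist_def G_def \<beta>_def)
    show "\<forall>(a1, a2, a3) \<in> C. (M.lsmult (1 - fls_X) (d a1) \<oplus>\<^bsub>M.Disp_module\<^esub> M.lsmult fls_X (d a2))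
        \<ominus>\<^bsub>M.Disp_module\<^esub> d a3 = \<zero>\<^bsub>M.Disp_module\<^esub>"
    proof (intro ballI, clarify)
      fix a1 a2 a3 assume crossing: "(a1, a2, a3) \<in> C"
      then have "a1 \<in> A" "a2 \<in> A" using assms(1) by (auto simp: diagram_def)
      then show "(M.lsmult (1 - fls_X) (d a1) \<oplus>\<^bsub>M.Disp_module\<^esub> M.lsmult fls_X (d a2))
          \<ominus>\<^bsub>M.Disp_module\<^esub> d a3 = \<zero>\<^bsub>M.Disp_module\<^esub>"
        using M.crossing_relation_qbeta[of "arc_elem A C a1" "arc_elem A C a2"]
        by (simp add: d \<beta>_def MQ_op_arc_elem_crossing[OF assms(1) crossing])
    qed
    show "\<forall>N. submodule N Lambda M.Disp_module \<and> d ` A \<subseteq> N \<longrightarrow> M.Disp \<subseteq> N"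
    proof (intro allI impI, elim conjE)
      fix N assume N: "submodule N Lambda M.Disp_module" and "d ` A \<subseteq> N"
      then have "M.disp (qbeta (MQ A C) (MQ_op A C) u) \<in> N" if "u \<in> arc_elem A C ` A" for u
        using that by (auto simp: d \<beta>_def)
      moreover have "arc_elem A C ` A \<subseteq> MQ A C" by auto
      ultimately show "M.Disp \<subseteq> N"
        using M.Dis_subset_submodule[OF generates_quandle_arcs _ N] by (simp add: Dis[symmetric] Q_def)
    qed
  qed
qed

end
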